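(* Let $F\colon X\hookrightarrow Y$ be an injective linear map of finite-dimensional vector spaces over a non-Archimedean local field $\mathbb{F}$; identify $X$ with its image in $Y$ and let $c=\dim Y-\dim X$. Let $\xi\in C(Gr_k^X,\mathcal{L}_k^X)\otimes D(X)^*$ and $E\in Gr_{k+c}^Y$. If $Y\ne E+X$ then $(F_*\xi)(E)=0$.
   Context: For a finite-dimensional space $W$, $D(W)$ is the one-dimensional space of $\mathbb{C}$-valued Lebesgue measures on $W$, with canonical isomorphisms $D(W)\cong D(K)\otimes D(W/K)$ for subspaces $K$, and $D(W)^*\cong D(W^\vee)$ (the dual of a non-vanishing $\mu$ goes to $\mu^{-1}$, defined by $\mu^{-1}(\Lambda^\vee)=1/\mu(\Lambda)$ for all lattices $\Lambda\subset W$, $\Lambda^\vee=\{f:f(\Lambda)\subset\mathcal{O}\}$). For linear $T\colon A\to B$ with $\dim A=\dim B$ and $\mu\in D(B)$, $T^*\mu$ is the measure $S\mapsto\mu(T(S))$ ($0$ if $T$ is not invertible). $Gr_k^V$ is the Grassmannian, $\mathcal{L}_k^V$ the line bundle with fiber $D(E)$ over $E$, and $C(Gr_k^V,\mathcal{L}_k^V)$ its Banach space of continuous sections. Pull-back of sections: for linear $G\colon A\to B$, $(G^*f)(E)=(G|_E)^*(f(G(E)))$ if $\dim G(E)=\dim E$, else $0$. Fourier transform: for $E\subset V$ ($\dim V=n$) with annihilator $E^\perp\subset V^\vee$, let $a_E\colon D(E)\to D(E^\perp)\otimes D(V^\vee)^*$ be the composite $D(E)\cong D(E^\vee)^*=D(V^\vee/E^\perp)^*\cong(D(V^\vee)\otimes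 D(E^\perp)^* )^*\cong D(E^\perp)\otimes D(V^\vee)^*$, and $\mathcal{F}_V\colon C(Gr_i^V,\mathcal{L}_i^V)\to C(Gr_{n-i}^{V^\vee},\mathcal{L}_{n-i}^{V^\vee})\otimes D(V^\vee)^*$, $(\mathcal{F}_V\phi)(E^\perp)=a_E(\phi(E))$; it is an isomorphism. Push-forward: for linear $F\colon X\to Y$ with dual $F^\vee\colon Y^\vee\to X^\vee$, $F_*:=\mathcal{F}_{Y^\vee}\circ(F^\vee)^*\circ\mathcal{F}_{X^\vee}^{-1}\colon C(Gr_k^X,\mathcal{L}_k^X)\otimes D(X)^*\to C(Gr_{k-\dim X+\dim Y}^Y,\mathcal{L}^Y_{k-\dim X+\dim Y})\otimes D(Y)^*$ (using $X^{\vee\vee}=X$, $D(X^\vee)^*=D(X)$ etc.). *)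

theory Defs
  imports "HOL-Analysis.Analysis"
begin

definition nonarch_local_field :: "('k::field \<Rightarrow> real) \<Rightarrow> bool" where
  "nonarch_local_field absv \<longleftrightarrow>
     absv 0 = 0 \<and> (\<forall>x. x \<noteq> 0 \<longrightarrow> absv x > 0)
   \<and> (\<forall>x y. absv (x * y) = absv x * absv y)
   \<and> (\<forall>x y. absv (x + y) \<le> max (absv x) (absv y))
   \<and> (\<exists>p. 0 < absv p \<and> absv p < 1 \<and> (\<forall>x. x \<noteq> 0 \<longrightarrow> (\<exists>n::int. absv x = absv p powi n)))
   \<and> (\<forall>s::nat \<Rightarrow> 'k. (\<forall>e>0. \<exists>N. \<forall>m\<ge>N. \<forall>n\<ge>N. absv (s m - s n) < e)
         \<longrightarrow> (\<exists>l. \<forall>e>0. \<exists>N. \<forall>n\<ge>N. absv (s n - l) < e))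
   \<and> finite ({x. absv x \<le> 1} // {(x, y). absv x \<le> 1 \<and> absv y \<le> 1 \<and> absv (x - y) < 1})"

definition intO :: "('k::field \<Rightarrow> real) \<Rightarrow> 'k set" where
  "intO absv = {a. absv a \<le> 1}"

text \<open>Finite-dimensional spaces are modelled as 'k^'n; the dual of
k^n is identified with k^n via the standard pairing.\<close>

definition pair :: "'k::field ^ 'n \<Rightarrow> 'k ^ 'n \<Rightarrow> 'k" where
  "pair f x = (\<Sum>i\<in>UNIV. f $ i * x $ i)"

definition perp :: "('k::field ^ 'n) set \<Rightarrow> ('k ^ 'n) set" where
  "perp E = {f. \<forall>x\<in>E. pair f x = 0}"

definition dualmap :: "('k::field ^ 'm \<Rightarrow> 'k ^ 'n) \<Rightarrow> 'k ^ 'n \<Rightarrow> 'k ^ 'm" where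
  "dualmap F = (\<lambda>g. \<chi> i. pair g (F (axis i 1)))"

definition grass :: "nat \<Rightarrow> ('k::field ^ 'n) set set" where
  "grass k = {E. vec.subspace E \<and> vec.dim E = k}"

definition is_lattice :: "('k::field \<Rightarrow> real) \<Rightarrow> ('k ^ 'n) set \<Rightarrow> ('k ^ 'n) set \<Rightarrow> bool" where
  "is_lattice absv W L \<longleftrightarrow> L \<subseteq> W \<and> vec.span L = W \<and>
     (\<exists>B. finite B \<and> B \<subseteq> L \<and>
        L = {(\<Sum>b\<in>B. c b *s b) | c. \<forall>b\<in>B. c b \<in> intO absv})"

definition dual_lat :: "('k::field \<Rightarrow> real) \<Rightarrow> ('k ^ 'n) set \<Rightarrow> ('k ^ 'n) set" where
  "dual_lat absv M = {x. \<forall>f\<in>M. absv (pair f x) \<le> 1}"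

definition std_lat :: "('k::field \<Rightarrow> real) \<Rightarrow> ('k ^ 'n) set" where
  "std_lat absv = {x. \<forall>i. absv (x $ i) \<le> 1}"

definition lat_index :: "('k::field ^ 'n) set \<Rightarrow> ('k ^ 'n) set \<Rightarrow> nat" where
  "lat_index L' L = card (L' // {(x, y). x \<in> L' \<and> y \<in> L' \<and> x - y \<in> L})"

text \<open>vol(L') / vol(L) for any Haar measure.\<close>
definition vol_ratio :: "('k::field ^ 'n) set \<Rightarrow> ('k ^ 'n) set \<Rightarrow> complex" where
  "vol_ratio L L' = of_nat (lat_index L' (L \<inter> L')) / of_nat (lat_index L (L \<inter> L'))"

text \<open>An element of D(W) (a complex Lebesgue/Haar measure on W) is recorded by its
values on lattices of W (and 0 elsewhere).\<close>
definition haar :: "('k::field \<Rightarrow> real) \<Rightarrow> ('k ^ 'n) set \<Rightarrow> (('k ^ 'n) set \<Rightarrow> complex) \<Rightarrow> bool" where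
  "haar absv W \<mu> \<longleftrightarrow>
     (\<forall>L L'. is_lattice absv W L \<and> is_lattice absv W L' \<and> L \<subseteq> L'
        \<longrightarrow> \<mu> L' = of_nat (lat_index L' L) * \<mu> L)
   \<and> (\<forall>L. \<not> is_lattice absv W L \<longrightarrow> \<mu> L = 0)"

text \<open>An element of D(W)^* = D(W^dual): L \<mapsto> \<psi>(\<mu>)/\<mu>(L).\<close>
definition cohaar :: "('k::field \<Rightarrow> real) \<Rightarrow> ('k ^ 'n) set \<Rightarrow> (('k ^ 'n) set \<Rightarrow> complex) \<Rightarrow> bool" where
  "cohaar absv W \<psi> \<longleftrightarrow>
     (\<forall>L L'. is_lattice absv W L \<and> is_lattice absv W L' \<and> L \<subseteq> L'
        \<longrightarrow> \<psi> L = of_nat (lat_index L' L) * \<psi> L')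
   \<and> (\<forall>L. \<not> is_lattice absv W L \<longrightarrow> \<psi> L = 0)"

text \<open>An element of D(E) \<otimes> D(W)^*: a function of (lattice of E, lattice of W).\<close>
definition haar_tw :: "('k::field \<Rightarrow> real) \<Rightarrow> ('k ^ 'n) set \<Rightarrow> ('k ^ 'n) set
    \<Rightarrow> (('k ^ 'n) set \<Rightarrow> ('k ^ 'n) set \<Rightarrow> complex) \<Rightarrow> bool" where
  "haar_tw absv E W \<tau> \<longleftrightarrow> (\<forall>M. haar absv E (\<lambda>L. \<tau> L M)) \<and> (\<forall>L. cohaar absv W (\<lambda>M. \<tau> L M))"

text \<open>Topology of the Grassmannian: quotient topology from linearly independent
k-frames (with the topology of the absolute value).\<close>
definition gr_continuous :: "('k::field \<Rightarrow> real) \<Rightarrow> nat \<Rightarrow> (('k ^ 'n) set \<Rightarrow> complex) \<Rightarrow> bool" where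
  "gr_continuous absv k g \<longleftrightarrow>
    (\<forall>v::nat \<Rightarrow> 'k ^ 'n. vec.independent (v ` {..<k}) \<and> inj_on v {..<k} \<longrightarrow>
      (\<forall>e>0. \<exists>d>0. \<forall>w::nat \<Rightarrow> 'k ^ 'n. vec.independent (w ` {..<k}) \<and> inj_on w {..<k}
         \<and> (\<forall>i<k. \<forall>j. absv (w i $ j - v i $ j) < d)
         \<longrightarrow> cmod (g (vec.span (w ` {..<k})) - g (vec.span (v ` {..<k}))) < e))"

text \<open>C(Gr_k^V, L_k^V): continuity is tested in the (locally constant) trivialization
E \<mapsto> measure normalized on std_lat \<inter> E.\<close>
definition sec_space :: "('k::field \<Rightarrow> real) \<Rightarrow> nat
    \<Rightarrow> (('k ^ 'n) set \<Rightarrow> ('k ^ 'n) set \<Rightarrow> complex) set" where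
  "sec_space absv k = {f. (\<forall>E\<in>grass k. haar absv E (f E))
     \<and> (\<forall>E. E \<notin> grass k \<longrightarrow> f E = (\<lambda>_. 0))
     \<and> gr_continuous absv k (\<lambda>E. f E (std_lat absv \<inter> E))}"

definition tsec_space :: "('k::field \<Rightarrow> real) \<Rightarrow> nat
    \<Rightarrow> (('k ^ 'n) set \<Rightarrow> ('k ^ 'n) set \<Rightarrow> ('k ^ 'n) set \<Rightarrow> complex) set" where
  "tsec_space absv k = {f. (\<forall>E\<in>grass k. haar_tw absv E UNIV (f E))
     \<and> (\<forall>E. E \<notin> grass k \<longrightarrow> f E = (\<lambda>_ _. 0))
     \<and> gr_continuous absv k (\<lambda>E. f E (std_lat absv \<inter> E) (std_lat absv))}"

definition pullback :: "('k::field \<Rightarrow> real) \<Rightarrow> ('k ^ 'a \<Rightarrow> 'k ^ 'b)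
    \<Rightarrow> (('k ^ 'b) set \<Rightarrow> ('k ^ 'b) set \<Rightarrow> complex)
    \<Rightarrow> (('k ^ 'a) set \<Rightarrow> ('k ^ 'a) set \<Rightarrow> complex)" where
  "pullback absv G f = (\<lambda>E. if vec.dim (G ` E) = vec.dim E
      then (\<lambda>S. if is_lattice absv E S then f (G ` E) (G ` S) else 0)
      else (\<lambda>_. 0))"

text \<open>The map a_E : D(E) \<rightarrow> D(E^perp) \<otimes> D(V^dual)^*, written out on lattices
L of E^perp and M of V^dual.\<close>
definition four_coef :: "('k::field \<Rightarrow> real) \<Rightarrow> ('k ^ 'n) set \<Rightarrow> (('k ^ 'n) set \<Rightarrow> complex)
    \<Rightarrow> ('k ^ 'n) set \<Rightarrow> ('k ^ 'n) set \<Rightarrow> complex" where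
  "four_coef absv E \<mu> = (\<lambda>L M.
     if is_lattice absv (perp E) L \<and> is_lattice absv UNIV M
     then \<mu> (E \<inter> dual_lat absv M) / vol_ratio L (M \<inter> perp E) else 0)"

definition fourier :: "('k::field \<Rightarrow> real) \<Rightarrow> nat
    \<Rightarrow> (('k ^ 'n) set \<Rightarrow> ('k ^ 'n) set \<Rightarrow> complex)
    \<Rightarrow> (('k ^ 'n) set \<Rightarrow> ('k ^ 'n) set \<Rightarrow> ('k ^ 'n) set \<Rightarrow> complex)" where
  "fourier absv i \<phi> = (\<lambda>E'. if E' \<in> grass (CARD('n) - i)
      then four_coef absv (perp E') (\<phi> (perp E')) else (\<lambda>_ _. 0))"

definition pushfwd :: "('k::field \<Rightarrow> real) \<Rightarrow> ('k ^ 'm \<Rightarrow> 'k ^ 'n) \<Rightarrow> nat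
    \<Rightarrow> (('k ^ 'm) set \<Rightarrow> ('k ^ 'm) set \<Rightarrow> ('k ^ 'm) set \<Rightarrow> complex)
    \<Rightarrow> (('k ^ 'n) set \<Rightarrow> ('k ^ 'n) set \<Rightarrow> ('k ^ 'n) set \<Rightarrow> complex)" where
  "pushfwd absv F k \<xi> =
     fourier absv (CARD('m) - k)
       (pullback absv (dualmap F)
         (inv_into (sec_space absv (CARD('m) - k)) (fourier absv (CARD('m) - k)) \<xi>))"

end

theory Submission
  imports Defs
begin

(* If E + X is a proper subspace of Y, a nonzero functional g on Y vanishes on it. Then g lies
   both in the annihilator of E and in the kernel of the dual map of F, so the dual map is not
   injective on that annihilator. The pull-back in the definition of the push-forward therefore
   vanishes at the annihilator of E, whatever section it is applied to, and so does its Fourier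
   transform at E. *)

lemma perp_antimono: "S \<subseteq> T \<Longrightarrow> perp T \<subseteq> perp S"
  unfolding perp_def by blast

lemma pair_linear_functional:
  fixes \<phi> :: "'k::field ^ 'n \<Rightarrow> 'k"
  assumes "Vector_Spaces.linear (*s) (*) \<phi>"
  shows "pair (\<chi> i. \<phi> (axis i 1)) x = \<phi> x"
proof -
  interpret \<phi>: Vector_Spaces.linear "(*s) :: 'k \<Rightarrow> 'k^'n \<Rightarrow> 'k^'n" "(*)" \<phi>
    by fact
  have "pair (\<chi> i. \<phi> (axis i 1)) x = (\<Sum>i\<in>UNIV. \<phi> (x $ i *s axis i 1))"
    unfolding pair_def by (simp add: \<phi>.scale mult.commute)
  also have "\<dots> = \<phi> (\<Sum>i\<in>UNIV. x $ i *s axis i 1)"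
    by (simp add: \<phi>.sum)
  also have "\<dots> = \<phi> x"
    by (simp add: basis_expansion)
  finally show ?thesis .
qed

lemma perp_proper_subspace_nonzero:
  fixes S :: "('k::field ^ 'n) set"
  assumes "vec.subspace S" "S \<noteq> UNIV"
  shows "\<exists>g\<in>perp S. g \<noteq> 0"
proof -
  obtain b where b: "b \<notin> S"
    using assms(2) by blast
  obtain B where B: "B \<subseteq> S" "vec.independent B" "S \<subseteq> vec.span B"
    by (rule vec.maximal_independent_subset)
  have span_B: "vec.span B = S"
    using B assms(1) by (metis vec.span_minimal subset_antisym)
  interpret functionals: vector_space_pair "(*s) :: 'k \<Rightarrow> 'k^'n \<Rightarrow> 'k^'n" "(*) :: 'k \<Rightarrow> 'k \<Rightarrow> 'k"
    by unfold_locales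
  have "vec.independent (insert b B)"
    using b B(2) span_B by (simp add: vec.independent_insertI)
  then obtain \<phi> where \<phi>: "Vector_Spaces.linear (*s) (*) \<phi>"
      "\<forall>x\<in>insert b B. \<phi> x = (if x = b then 1 else 0)"
    using functionals.linear_independent_extend[of _ "\<lambda>x. if x = b then 1 else 0"] by blast
  interpret \<phi>: Vector_Spaces.linear "(*s) :: 'k \<Rightarrow> 'k^'n \<Rightarrow> 'k^'n" "(*)" \<phi>
    by (fact \<phi>(1))
  define g where "g = (\<chi> i. \<phi> (axis i 1))"
  have "\<phi> y = 0" if "y \<in> B" for y
    using \<phi>(2) b B(1) that by auto
  then have "\<phi> x = 0" if "x \<in> S" for x
    using \<phi>.eq_0_on_span span_B that by blast
  then have "g \<in> perp S"
    unfolding perp_def g_def by (simp add: pair_linear_functional[OF \<phi>(1)])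
  moreover have "pair g b = 1"
    unfolding g_def by (simp add: pair_linear_functional[OF \<phi>(1)] \<phi>(2))
  then have "g \<noteq> 0"
    by (auto simp: pair_def)
  ultimately show ?thesis by blast
qed

lemma subspace_sum_range:
  fixes F :: "'k::field ^ 'm \<Rightarrow> 'k ^ 'n"
  assumes "Vector_Spaces.linear (*s) (*s) F" and "vec.subspace E"
  shows "vec.subspace {e + F x | e x. e \<in> E}"
    and "E \<subseteq> {e + F x | e x. e \<in> E}"
    and "range F \<subseteq> {e + F x | e x. e \<in> E}"
proof -
  interpret F: Vector_Spaces.linear "(*s) :: 'k \<Rightarrow> 'k^'m \<Rightarrow> 'k^'m" "(*s) :: 'k \<Rightarrow> 'k^'n \<Rightarrow> 'k^'n" F
    by fact
  have "{e + F x | e x. e \<in> E} = {e + y | e y. e \<in> E \<and> y \<in> range F}"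
    by blast
  then show "vec.subspace {e + F x | e x. e \<in> E}"
    using vec.subspace_sums[OF assms(2) F.subspace_image[OF vec.subspace_UNIV]] by simp
  show "E \<subseteq> {e + F x | e x. e \<in> E}"
  proof
    fix e assume "e \<in> E"
    then have "e + F 0 \<in> {e + F x | e x. e \<in> E}" by blast
    then show "e \<in> {e + F x | e x. e \<in> E}" by (simp add: F.zero)
  qed
  show "range F \<subseteq> {e + F x | e x. e \<in> E}"
  proof
    fix y assume "y \<in> range F"
    then obtain x where "y = F x" by blast
    moreover have "0 + F x \<in> {e + F x | e x. e \<in> E}"
      using vec.subspace_0[OF assms(2)] by blast
    ultimately show "y \<in> {e + F x | e x. e \<in> E}" by simp
  qed
qed

lemma linear_dualmap: "Vector_Spaces.linear (*s) (*s) (dualmap F)"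
proof -
  have "dualmap F (x + y) = dualmap F x + dualmap F y" for x y
    by (simp add: dualmap_def pair_def vec_eq_iff sum.distrib distrib_right)
  moreover have "dualmap F (c *s x) = c *s dualmap F x" for c x
    by (simp add: dualmap_def pair_def vec_eq_iff sum_distrib_left mult.assoc)
  ultimately show ?thesis
    unfolding Vector_Spaces.linear_iff by (simp add: vec.vector_space_axioms)
qed

lemma dualmap_eq_0_if_perp_range: "g \<in> perp (range F) \<Longrightarrow> dualmap F g = 0"
  unfolding perp_def dualmap_def by (simp add: vec_eq_iff)

lemma dim_image_less_if_kernel:
  fixes G :: "'k::field ^ 'n \<Rightarrow> 'k ^ 'm"
  assumes "Vector_Spaces.linear (*s) (*s) G"
    and "g \<in> P" "g \<noteq> 0" "G g = 0"
  shows "vec.dim (G ` P) < vec.dim P"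
proof -
  interpret G: Vector_Spaces.linear "(*s) :: 'k \<Rightarrow> 'k^'n \<Rightarrow> 'k^'n" "(*s) :: 'k \<Rightarrow> 'k^'m \<Rightarrow> 'k^'m" G
    by fact
  obtain B where B: "g \<in> B" "B \<subseteq> P" "vec.independent B" "P \<subseteq> vec.span B"
    using vec.maximal_independent_subset_extend[of "{g}" P] assms(2,3) by auto
  have "finite B"
    using B(3) vec.finiteI_independent by blast
  have "vec.dim P = card B"
    using B vec.span_superset by (intro vec.dim_eq_card) (auto simp: vec.span_eq)
  have "G ` P \<subseteq> vec.span (G ` B)"
    using G.spans_image[OF B(4)] .
  also have "G ` B = insert 0 (G ` (B - {g}))"
    using B(1) assms(4) by auto
  finally have "vec.dim (G ` P) \<le> card (G ` (B - {g}))"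
    using \<open>finite B\<close> by (simp add: vec.dim_le_card)
  also have "\<dots> < card B"
    using \<open>finite B\<close> B(1) by (meson card_image_le card_Diff1_less finite_Diff le_less_trans)
  finally show ?thesis
    using \<open>vec.dim P = card B\<close> by simp
qed

lemma pullback_degenerate:
  "vec.dim (G ` E) \<noteq> vec.dim E \<Longrightarrow> pullback absv G f E = (\<lambda>_. 0)"
  unfolding pullback_def by simp

lemma fourier_eq_0_if_vanishes_at_perp:
  "\<phi> (perp E) = (\<lambda>_. 0) \<Longrightarrow> fourier absv i \<phi> E = (\<lambda>_ _. 0)"
  unfolding fourier_def four_coef_def by (simp add: fun_eq_iff)

theorem proposition11p2:
  fixes absv :: "'k::field \<Rightarrow> real"
    and F :: "'k ^ 'm \<Rightarrow> 'k ^ 'n"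
    and k :: nat
    and \<xi> :: "('k ^ 'm) set \<Rightarrow> ('k ^ 'm) set \<Rightarrow> ('k ^ 'm) set \<Rightarrow> complex"
    and E :: "('k ^ 'n) set"
  assumes "nonarch_local_field absv"
    and "Vector_Spaces.linear (*s) (*s) F"
    and "inj F"
    and "\<xi> \<in> tsec_space absv k"
    and "E \<in> grass (k + (CARD('n) - CARD('m)))"
    and "{e + F x | e x. e \<in> E} \<noteq> UNIV"
  shows "pushfwd absv F k \<xi> E = (\<lambda>_ _. 0)"
proof -
  let ?S = "{e + F x | e x. e \<in> E}"
  have subspace_E: "vec.subspace E"
    using assms(5) unfolding grass_def by blast
  note sum_range = subspace_sum_range[OF assms(2) subspace_E]
  obtain g where g: "g \<in> perp ?S" "g \<noteq> 0"
    using perp_proper_subspace_nonzero[OF sum_range(1) assms(6)] by blast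
  have "g \<in> perp E"
    using perp_antimono[OF sum_range(2)] g(1) by blast
  moreover have "dualmap F g = 0"
    using perp_antimono[OF sum_range(3)] g(1) dualmap_eq_0_if_perp_range by blast
  ultimately have "vec.dim (dualmap F ` perp E) < vec.dim (perp E)"
    using dim_image_less_if_kernel[OF linear_dualmap] g(2) by blast
  then show ?thesis
    unfolding pushfwd_def by (simp add: fourier_eq_0_if_vanishes_at_perp pullback_degenerate)
qed

end
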